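(* Under the hypotheses and with the construction of Theorem 1 (full approximate solution for nonnegativity constraints), there exist $\rho>0$, $\bar\mu\in(0,\hat\mu]$ and $C>0$ such that in the same regime (all $\mu\in(0,\bar\mu]$, $(x,\lambda)\in\mathcal B((x^*,\lambda^* ),\delta)$, $x>0,\lambda>0$, $\|(x,\lambda)-(x^\mu,\lambda^\mu)\|<\rho$, $\|F_\mu(x,\lambda)\|\le C_1\mu$): $$\|\Delta x^{ls}_{\mathcal I}-\Delta x^N_{\mathcal I}\|\le C\mu^2\quad\text{and}\quad \|\Delta\lambda^{ls}_{\mathcal I}-\Delta\lambda^N_{\mathcal I}\|\le C\mu^3 .$$
   Context: Problem: minimize $f(x)$ subject to $x\ge0$, $f$ twice continuously differentiable with locally Lipschitz Hessian; $H=\nabla^2f(x)$, $X=\mathrm{diag}(x)$, $\Lambda=\mathrm{diag}(\lambda)$, $e$ all-ones, Euclidean norms. $F_\mu(x,\lambda)=(\nabla f(x)-\lambda,\ \Lambda Xe-\mu e)$, $F'(x,\lambda)=\begin{bmatrix}H&-I\\\Lambda&X\end{bmatrix}$; Newton direction for $\mu^+=\sigma\mu$ ($\sigma\in(0,1)$) solves $F'(\Delta x^N,\Delta\lambda^N)=-F_{\mu^+}(x,\lambda)$. $(x^*,\lambda^* )$ satisfies $\nabla f(x^* )=\lambda^*$, $x^*,\lambda^*\ge0$, $x_i^*\lambda_i^*=0$, $x^*+\lambda^*>0$, $[\nabla^2f(x^* )]_{\mathcal I\mathcal I}\succ0$, $\mathcal A=\{i:x^*_i=0\}$, $\mathcal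 I=\{i:x^*_i>0\}$; $\delta,\hat\mu$ and the barrier trajectory $(x^\mu,\lambda^\mu)$ as usual ($F'$ nonsingular with bounded inverse on $\mathcal B((x^*,\lambda^* ),\delta)$; $F_\mu(x^\mu,\lambda^\mu)=0$, Lipschitz, $\|(x^\mu,\lambda^\mu)-(x^*,\lambda^* )\|\le C_4\mu$). $C_1>0$ fixed. Construction: $\Delta x_i\in\{\Delta x_i^S,\Delta x_i^C\}$ for $i\in\mathcal A$, with $\Delta x_i^S=-\frac{x_i[\nabla f(x)]_i-\mu^+}{x_iH_{ii}+\lambda_i}$, $\Delta x_i^C=-x_i+\mu^+/\lambda_i$; $\Delta x^{ls}_{\mathcal I}$ solves $(H_{\mathcal I\mathcal I}+X_{\mathcal I\mathcal I}^{-1}\Lambda_{\mathcal I\mathcal I})\Delta x^{ls}_{\mathcal I}=-(\nabla f(x)_{\mathcal I}+H_{\mathcal I\mathcal A}\Delta x_{\mathcal A})+\mu^+X_{\mathcal I\mathcal I}^{-1}e$; $\Delta\lambda^{ls}_{\mathcal I}=-\lambda_{\mathcal I}+\mu^+X_{\mathcal I\mathcal I}^{-1}e-X_{\mathcal I\mathcal I}^{-1}\Lambda_{\mathcal I\mathcal I}\Delta x^{ls}_{\mathcal I}$. *)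

theory Defs
  imports "HOL-Analysis.Analysis"
begin

text \<open>Vectors in R^n are rendered as real^'n; pairs (x,lambda) live in the product
 space whose norm is the Euclidean norm sqrt(|x|^2+|lambda|^2).
 g is the gradient of f, Hf its Hessian.\<close>

definition Fmu :: "(real^'n \<Rightarrow> real^'n) \<Rightarrow> real \<Rightarrow> real^'n \<Rightarrow> real^'n \<Rightarrow> (real^'n) \<times> (real^'n)" where
  "Fmu g mu x l = (g x - l, (\<chi> i. l$i * x$i - mu))"

definition Fprime :: "(real^'n \<Rightarrow> real^'n^'n) \<Rightarrow> real^'n \<Rightarrow> real^'n \<Rightarrow> (real^'n) \<times> (real^'n) \<Rightarrow> (real^'n) \<times> (real^'n)" where
  "Fprime Hf x l w = (Hf x *v fst w - snd w, (\<chi> i. l$i * fst w $ i + x$i * snd w $ i))"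

definition restr :: "'n set \<Rightarrow> real^'n \<Rightarrow> real^'n" where
  "restr S v = (\<chi> i. if i \<in> S then v$i else 0)"

definition dxS :: "(real^'n \<Rightarrow> real^'n) \<Rightarrow> (real^'n \<Rightarrow> real^'n^'n) \<Rightarrow> real \<Rightarrow> real^'n \<Rightarrow> real^'n \<Rightarrow> 'n \<Rightarrow> real" where
  "dxS g Hf mup x l i = - (x$i * g x $ i - mup) / (x$i * Hf x $ i $ i + l$i)"

definition dxC :: "real \<Rightarrow> real^'n \<Rightarrow> real^'n \<Rightarrow> 'n \<Rightarrow> real" where
  "dxC mup x l i = - x$i + mup / l$i"

text \<open>The reduced (I-block) system defining Delta x^ls_I, given the A-components dxA.\<close>
definition ls_system :: "(real^'n \<Rightarrow> real^'n) \<Rightarrow> (real^'n \<Rightarrow> real^'n^'n) \<Rightarrow> 'n set \<Rightarrow> 'n set \<Rightarrow> real \<Rightarrow> real^'n \<Rightarrow> real^'n \<Rightarrow> ('n \<Rightarrow> real) \<Rightarrow> real^'n \<Rightarrow> bool" where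
  "ls_system g Hf A I mup x l dxA d \<longleftrightarrow>
     (\<forall>i\<in>I. (\<Sum>j\<in>I. Hf x $ i $ j * d$j) + l$i / x$i * d$i
            = - (g x $ i + (\<Sum>j\<in>A. Hf x $ i $ j * dxA j)) + mup / x$i)"

definition dl_ls :: "real \<Rightarrow> real^'n \<Rightarrow> real^'n \<Rightarrow> real^'n \<Rightarrow> real^'n" where
  "dl_ls mup x l d = (\<chi> i. - l$i + mup / x$i - l$i / x$i * d$i)"

end

theory Submission
  imports Defs
begin

(* The reduced step is completed to a full primal-dual direction (z, dl): on A the primal part is the
   chosen Delta x_A and the dual part is chosen so that the first block row of the Newton system holds
   exactly, while on I both block rows hold exactly by construction of the reduced system. Hence
   w = (z, dl) - (Delta x^N, Delta lambda^N) satisfies F'(w) = (0, r), where r vanishes on I and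
   r_i = x_i * O(|z| + mu) on A. Near the solution, strict complementarity makes x_i = O(mu) on A, so
   |r| = O(mu (|z| + mu)). The uniform bound on the inverse of F' and |z| <= |w| + |Delta x^N| <= |w| + O(mu)
   give |w| <= O(mu) |w| + O(mu^2), and the first term is absorbed for small mu. Finally
   Delta lambda^ls_i - Delta lambda^N_i = (lambda_i / x_i) (Delta x^N_i - Delta x^ls_i) on I, and
   lambda_i / x_i = O(mu) there, which gains the third power of mu. *)

lemma matrix_vector_mult_component_le:
  fixes H :: "real^'n^'m"
  shows "\<bar>(H *v z)$i\<bar> \<le> norm H * norm z"
proof -
  have "\<bar>(H *v z)$i\<bar> \<le> norm (H$i) * norm z"
    unfolding matrix_vector_mul_component by (rule Cauchy_Schwarz_ineq2)
  also have "\<dots> \<le> norm H * norm z"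
    by (intro mult_right_mono Finite_Cartesian_Product.norm_nth_le) simp
  finally show ?thesis .
qed

lemma matrix_entry_le_norm:
  fixes H :: "real^'n^'m"
  shows "\<bar>H$i$j\<bar> \<le> norm H"
  using component_le_norm_cart[of "H$i" j] Finite_Cartesian_Product.norm_nth_le[of H i] by linarith

lemma norm_le_card_mult_component_bound:
  fixes v :: "real^'n"
  assumes "\<And>i. \<bar>v$i\<bar> \<le> B"
  shows "norm v \<le> real CARD('n) * B"
proof -
  have "norm v \<le> (\<Sum>i\<in>UNIV. \<bar>v$i\<bar>)" by (rule norm_le_l1_cart)
  also have "\<dots> \<le> (\<Sum>i\<in>(UNIV::'n set). B)" by (rule sum_mono) (rule assms)
  finally show ?thesis by simp
qed

lemma finite_pos_lower_bound:
  fixes f :: "'a::finite \<Rightarrow> real"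
  assumes "\<And>i. 0 < f i"
  shows "\<exists>m>0. \<forall>i. m \<le> f i"
  using assms by (intro exI[of _ "Min (range f)"]) auto

lemma lipschitz_on_ball_imp_bounded:
  fixes h :: "'a::real_normed_vector \<Rightarrow> 'b::real_normed_vector"
  assumes "0 < e" and "\<forall>y\<in>ball x e. \<forall>z\<in>ball x e. norm (h y - h z) \<le> L * norm (y - z)"
  shows "\<exists>M\<ge>0. \<forall>y\<in>ball x e. norm (h y) \<le> M"
proof (intro exI[of _ "norm (h x) + \<bar>L\<bar> * e"] conjI ballI)
  show "0 \<le> norm (h x) + \<bar>L\<bar> * e" using assms(1) by simp
  fix y assume y: "y \<in> ball x e"
  have "norm (h y - h x) \<le> L * norm (y - x)" using assms y centre_in_ball[of x e] by blast
  also have "\<dots> \<le> \<bar>L\<bar> * e"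
    using y by (intro mult_mono) (auto simp: dist_norm norm_minus_commute)
  finally show "norm (h y) \<le> norm (h x) + \<bar>L\<bar> * e" using norm_triangle_sub[of "h y" "h x"] by linarith
qed

lemma bound_with_nonneg_constant:
  fixes f :: "'a \<Rightarrow> 'b \<Rightarrow> real"
  assumes "\<exists>K. \<forall>p\<in>S. \<forall>w. u w \<le> K * f p w" and "\<And>p w. 0 \<le> f p w"
  shows "\<exists>K\<ge>0. \<forall>p\<in>S. \<forall>w. u w \<le> K * f p w"
proof -
  obtain K where K: "\<forall>p\<in>S. \<forall>w. u w \<le> K * f p w" using assms(1) ..
  have "K * f p w \<le> max K 0 * f p w" for p w by (intro mult_right_mono) (auto simp: assms(2))
  with K have "\<forall>p\<in>S. \<forall>w. u w \<le> max K 0 * f p w" by (meson order_trans)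
  then show ?thesis by (intro exI[of _ "max K 0"]) auto
qed

lemma mult_le_of_le_divide_add_one:
  fixes c \<mu> t :: real
  assumes "0 \<le> c" "0 \<le> \<mu>" "\<mu> \<le> t / (c + 1)"
  shows "c * \<mu> \<le> t"
proof -
  have "\<mu> * (c + 1) \<le> t" using assms pos_le_divide_eq[of "c + 1"] by simp
  then show ?thesis using assms(2) by (simp add: algebra_simps)
qed

lemma Fmu_component_le:
  assumes "norm (Fmu g mu x l) \<le> B"
  shows "\<bar>g x $ i - l$i\<bar> \<le> B" and "\<bar>l$i * x$i - mu\<bar> \<le> B"
  using assms component_le_norm_cart[of "g x - l" i] component_le_norm_cart[of "\<chi> i. l$i * x$i - mu" i]
    norm_fst_le[of "g x - l" "\<chi> i. l$i * x$i - mu"] norm_snd_le[of "\<chi> i. l$i * x$i - mu" "g x - l"]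
  by (auto simp: Fmu_def)

lemma norm_Fmu_change_mu:
  fixes x l :: "real^'n"
  shows "norm (Fmu g \<nu> x l) \<le> norm (Fmu g \<mu> x l) + real CARD('n) * \<bar>\<mu> - \<nu>\<bar>"
proof -
  have "Fmu g \<nu> x l = Fmu g \<mu> x l + (0, \<chi> i. \<mu> - \<nu>)"
    unfolding Fmu_def by (simp add: vec_eq_iff)
  then have "norm (Fmu g \<nu> x l) \<le> norm (Fmu g \<mu> x l) + norm (\<chi> i::'n. \<mu> - \<nu>)"
    using norm_triangle_ineq[of "Fmu g \<mu> x l" "(0, \<chi> i. \<mu> - \<nu>)"] by simp
  also have "norm (\<chi> i::'n. \<mu> - \<nu>) \<le> real CARD('n) * \<bar>\<mu> - \<nu>\<bar>"
    by (simp add: norm_le_card_mult_component_bound)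
  finally show ?thesis by simp
qed

lemma Fprime_diff: "Fprime Hf x l (u - v) = Fprime Hf x l u - Fprime Hf x l v"
  by (simp add: Fprime_def vec_eq_iff algebra_simps)

lemma newton_step_norm_le:
  fixes x l :: "real^'n"
  assumes K: "0 \<le> K" "\<And>w. norm w \<le> K * norm (Fprime Hf x l w)"
    and F: "norm (Fmu g \<mu> x l) \<le> C1 * \<mu>" and \<mu>: "0 \<le> \<mu>" and \<sigma>: "0 \<le> \<sigma>" "\<sigma> \<le> 1"
    and newton: "Fprime Hf x l (dxN, dlN) = - Fmu g (\<sigma> * \<mu>) x l"
  shows "norm (dxN, dlN) \<le> K * (C1 + real CARD('n)) * \<mu>"
proof -
  have "\<bar>\<mu> - \<sigma> * \<mu>\<bar> \<le> \<mu>"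
    using \<sigma> \<mu> mult_left_le_one_le[of \<mu> \<sigma>] by (simp add: abs_le_iff)
  then have "real CARD('n) * \<bar>\<mu> - \<sigma> * \<mu>\<bar> \<le> real CARD('n) * \<mu>" by (intro mult_left_mono) auto
  then have "norm (Fmu g (\<sigma> * \<mu>) x l) \<le> C1 * \<mu> + real CARD('n) * \<mu>"
    using norm_Fmu_change_mu[of g "\<sigma> * \<mu>" x l \<mu>] F by linarith
  then have "norm (Fmu g (\<sigma> * \<mu>) x l) \<le> (C1 + real CARD('n)) * \<mu>" by (simp add: algebra_simps)
  then have "K * norm (Fmu g (\<sigma> * \<mu>) x l) \<le> K * ((C1 + real CARD('n)) * \<mu>)"
    using K(1) by (rule mult_left_mono)
  then show ?thesis using K(2)[of "(dxN, dlN)"] by (simp add: newton mult.assoc)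
qed

definition ls_full_dx :: "'n set \<Rightarrow> ('n \<Rightarrow> real) \<Rightarrow> real^'n \<Rightarrow> real^'n" where
  "ls_full_dx I dxA d = (\<chi> i. if i \<in> I then d$i else dxA i)"

definition ls_full_dl :: "(real^'n \<Rightarrow> real^'n) \<Rightarrow> (real^'n \<Rightarrow> real^'n^'n) \<Rightarrow> 'n set \<Rightarrow> real \<Rightarrow>
    real^'n \<Rightarrow> real^'n \<Rightarrow> ('n \<Rightarrow> real) \<Rightarrow> real^'n \<Rightarrow> real^'n" where
  "ls_full_dl g Hf I mup x l dxA d =
     (\<chi> i. if i \<in> I then dl_ls mup x l d $ i else (Hf x *v ls_full_dx I dxA d)$i + g x $ i - l$i)"

lemma matrix_vector_mult_ls_full_dx:
  assumes "A \<inter> I = {}" "A \<union> I = UNIV"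
  shows "(H *v ls_full_dx I dxA d)$i = (\<Sum>j\<in>I. H$i$j * d$j) + (\<Sum>j\<in>A. H$i$j * dxA j)"
proof -
  have "(H *v ls_full_dx I dxA d)$i = (\<Sum>j\<in>I \<union> A. H$i$j * ls_full_dx I dxA d $ j)"
    using assms(2) by (simp add: matrix_vector_mult_def Un_commute)
  also have "\<dots> = (\<Sum>j\<in>I. H$i$j * ls_full_dx I dxA d $ j) + (\<Sum>j\<in>A. H$i$j * ls_full_dx I dxA d $ j)"
    using assms(1) by (intro sum.union_disjoint) auto
  also have "\<dots> = (\<Sum>j\<in>I. H$i$j * d$j) + (\<Sum>j\<in>A. H$i$j * dxA j)"
    using assms(1) by (auto intro!: sum.cong arg_cong2[where f="(+)"] simp: ls_full_dx_def)
  finally show ?thesis .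
qed

lemma ls_full_residual_vanishes:
  assumes AI: "A \<inter> I = {}" "A \<union> I = UNIV" and x: "\<And>i. i \<in> I \<Longrightarrow> x$i \<noteq> 0"
    and ls: "ls_system g Hf A I mup x l dxA d"
  defines "r \<equiv> Fprime Hf x l (ls_full_dx I dxA d, ls_full_dl g Hf I mup x l dxA d) + Fmu g mup x l"
  shows "fst r = 0" and "\<And>i. i \<in> I \<Longrightarrow> snd r $ i = 0"
proof -
  have "fst r $ i = 0" for i
  proof (cases "i \<in> I")
    case True
    with ls have "(\<Sum>j\<in>I. Hf x$i$j * d$j) + l$i / x$i * d$i
        = - (g x $ i + (\<Sum>j\<in>A. Hf x$i$j * dxA j)) + mup / x$i"
      unfolding ls_system_def by blast
    with True show ?thesis
      by (simp add: r_def Fprime_def Fmu_def ls_full_dl_def dl_ls_def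
          matrix_vector_mult_ls_full_dx[OF AI] algebra_simps)
  qed (simp add: r_def Fprime_def Fmu_def ls_full_dl_def)
  then show "fst r = 0" by (simp add: vec_eq_iff)
  show "snd r $ i = 0" if "i \<in> I" for i
    using that x[OF that]
    by (simp add: r_def Fprime_def Fmu_def ls_full_dl_def ls_full_dx_def dl_ls_def field_simps)
qed

lemma ls_full_residual_bound:
  fixes d :: "real^'n"
  assumes "i \<notin> I" and dxA: "dxA i = dxS g Hf mup x l i \<or> dxA i = dxC mup x l i"
    and den: "x$i * Hf x$i$i + l$i \<noteq> 0" "l$i \<noteq> 0"
  defines "z \<equiv> ls_full_dx I dxA d"
  shows "\<bar>snd (Fprime Hf x l (z, ls_full_dl g Hf I mup x l dxA d) + Fmu g mup x l) $ i\<bar>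
    \<le> \<bar>x$i\<bar> * (\<bar>(Hf x *v z)$i\<bar> + \<bar>Hf x$i$i * z$i\<bar> + \<bar>g x $ i - l$i\<bar>)"
    (is "\<bar>?r\<bar> \<le> \<bar>x$i\<bar> * ?b")
proof -
  have zi: "z$i = dxA i" and r: "?r = l$i * z$i + x$i * ((Hf x *v z)$i + g x $ i - l$i) + l$i * x$i - mup"
    using \<open>i \<notin> I\<close> by (simp_all add: z_def Fprime_def Fmu_def ls_full_dl_def ls_full_dx_def)
  from dxA consider "dxA i = dxS g Hf mup x l i" | "dxA i = dxC mup x l i" by blast
  then show ?thesis
  proof cases
    case 1
    then have "(x$i * Hf x$i$i + l$i) * z$i = mup - x$i * g x $ i"
      using den(1) by (simp add: zi dxS_def field_simps)
    then have "?r = x$i * ((Hf x *v z)$i - Hf x$i$i * z$i)"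
      unfolding r by (simp add: algebra_simps)
    moreover have "\<bar>(Hf x *v z)$i - Hf x$i$i * z$i\<bar> \<le> ?b"
      using abs_triangle_ineq4[of "(Hf x *v z)$i" "Hf x$i$i * z$i"] by simp
    ultimately show ?thesis by (simp add: abs_mult mult_left_mono)
  next
    case 2
    then have "l$i * z$i = mup - l$i * x$i"
      using den(2) by (simp add: zi dxC_def field_simps)
    then have "?r = x$i * ((Hf x *v z)$i + (g x $ i - l$i))"
      unfolding r by (simp add: algebra_simps)
    moreover have "\<bar>(Hf x *v z)$i + (g x $ i - l$i)\<bar> \<le> ?b"
      using abs_triangle_ineq[of "(Hf x *v z)$i" "g x $ i - l$i"] by simp
    ultimately show ?thesis by (simp add: abs_mult mult_left_mono)
  qed
qed

lemma norm_ls_full_residual_le: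
  fixes x l d :: "real^'n"
  assumes AI: "A \<inter> I = {}" "A \<union> I = UNIV" and pos: "\<And>i. 0 < x$i" "\<And>i. 0 < l$i"
    and M: "norm (Hf x) \<le> M" and gl: "0 \<le> c" "\<And>i. \<bar>g x $ i - l$i\<bar> \<le> c"
    and xA: "0 \<le> t" "\<And>i. i \<in> A \<Longrightarrow> x$i \<le> t"
    and den: "\<And>i. i \<in> A \<Longrightarrow> x$i * Hf x$i$i + l$i \<noteq> 0"
    and dxA: "\<forall>i\<in>A. dxA i = dxS g Hf mup x l i \<or> dxA i = dxC mup x l i"
    and ls: "ls_system g Hf A I mup x l dxA d"
  defines "z \<equiv> ls_full_dx I dxA d"
  defines "r \<equiv> Fprime Hf x l (z, ls_full_dl g Hf I mup x l dxA d) + Fmu g mup x l"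
  shows "fst r = 0" and "norm (snd r) \<le> real CARD('n) * (t * (2 * M * norm z + c))"
proof -
  have x_ne: "\<And>i. x$i \<noteq> 0" using pos(1) by (metis less_irrefl)
  note vanishes = ls_full_residual_vanishes[OF AI x_ne ls, folded z_def, folded r_def]
  show "fst r = 0" by (rule vanishes(1))
  have M0: "0 \<le> M" using M norm_ge_zero order_trans by blast
  have "\<bar>snd r $ i\<bar> \<le> t * (2 * M * norm z + c)" for i
  proof (cases "i \<in> I")
    case True
    then show ?thesis using xA(1) M0 gl(1) by (simp add: vanishes(2))
  next
    case False
    then have iA: "i \<in> A" using AI by blast
    have "\<bar>snd r $ i\<bar> \<le> \<bar>x$i\<bar> * (\<bar>(Hf x *v z)$i\<bar> + \<bar>Hf x$i$i * z$i\<bar> + \<bar>g x $ i - l$i\<bar>)"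
      unfolding r_def z_def
      using ls_full_residual_bound[OF False] dxA iA den[OF iA] pos(2)[of i] by fastforce
    also have "\<dots> \<le> t * (2 * M * norm z + c)"
    proof (intro mult_mono)
      have "\<bar>(Hf x *v z)$i\<bar> \<le> M * norm z"
        using matrix_vector_mult_component_le[of "Hf x" z i] M
        by (meson mult_right_mono norm_ge_zero order_trans)
      moreover have "\<bar>Hf x$i$i * z$i\<bar> \<le> M * norm z"
        unfolding abs_mult using matrix_entry_le_norm[of "Hf x" i i] M component_le_norm_cart[of z i]
        by (intro mult_mono) auto
      ultimately show "\<bar>(Hf x *v z)$i\<bar> + \<bar>Hf x$i$i * z$i\<bar> + \<bar>g x $ i - l$i\<bar> \<le> 2 * M * norm z + c"
        using gl(2)[of i] by simp
    qed (use xA(2)[OF iA] pos(1)[of i] in auto)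
    finally show ?thesis .
  qed
  then show "norm (snd r) \<le> real CARD('n) * (t * (2 * M * norm z + c))"
    by (rule norm_le_card_mult_component_bound)
qed

lemma ls_newton_dx_error_bound:
  fixes x l :: "real^'n"
  defines "n \<equiv> real CARD('n)"
  assumes AI: "A \<inter> I = {}" "A \<union> I = UNIV"
    and pos: "\<And>i. 0 < x$i" "\<And>i. 0 < l$i"
    and K: "0 \<le> K" "\<And>w. norm w \<le> K * norm (Fprime Hf x l w)"
    and M: "norm (Hf x) \<le> M"
    and \<mu>: "0 < \<mu>" and \<sigma>: "0 \<le> \<sigma>" "\<sigma> \<le> 1"
    and F: "norm (Fmu g \<mu> x l) \<le> C1 * \<mu>"
    and xA: "0 \<le> a" "\<And>i. i \<in> A \<Longrightarrow> x$i \<le> a * \<mu>"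
    and den: "\<And>i. i \<in> A \<Longrightarrow> x$i * Hf x$i$i + l$i \<noteq> 0"
    and small: "4 * K * n * a * M * \<mu> \<le> 1"
    and dxA: "\<forall>i\<in>A. dxA i = dxS g Hf (\<sigma> * \<mu>) x l i \<or> dxA i = dxC (\<sigma> * \<mu>) x l i"
    and ls: "ls_system g Hf A I (\<sigma> * \<mu>) x l dxA d"
    and newton: "Fprime Hf x l (dxN, dlN) = - Fmu g (\<sigma> * \<mu>) x l"
  shows "norm (restr I d - restr I dxN) \<le> 2 * K * n * a * (2 * M * K * (C1 + n) + C1) * \<mu>^2"
proof -
  define z where "z = ls_full_dx I dxA d"
  define dl where "dl = ls_full_dl g Hf I (\<sigma> * \<mu>) x l dxA d"
  define w where "w = (z - dxN, dl - dlN)"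
  have "0 \<le> C1 * \<mu>" using F norm_ge_zero order_trans by blast
  then have C1: "0 \<le> C1" using \<mu> by (simp add: zero_le_mult_iff)
  have M0: "0 \<le> M" using M norm_ge_zero order_trans by blast
  define r where "r = Fprime Hf x l (z, dl) + Fmu g (\<sigma> * \<mu>) x l"
  have \<mu>0: "0 \<le> \<mu>" using \<mu> by simp
  note r = norm_ls_full_residual_le[OF AI pos M mult_nonneg_nonneg[OF C1 \<mu>0] Fmu_component_le(1)[OF F]
      mult_nonneg_nonneg[OF xA(1) \<mu>0] xA(2) den dxA ls, folded z_def dl_def, folded r_def n_def]
  have "Fprime Hf x l w = r"
    using Fprime_diff[of Hf x l "(z, dl)" "(dxN, dlN)"] newton by (simp add: w_def r_def)
  then have "norm w \<le> K * norm (snd r)"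
    using K(2)[of w] r(1) by (simp add: norm_prod_def)
  also have "\<dots> \<le> K * (n * (a * \<mu> * (2 * M * norm z + C1 * \<mu>)))"
    using r(2) K(1) by (intro mult_left_mono) (simp_all add: mult.assoc)
  also have "\<dots> \<le> K * (n * (a * \<mu> * (2 * M * (norm w + K * (C1 + n) * \<mu>) + C1 * \<mu>)))"
  proof -
    have "norm z \<le> norm w + K * (C1 + n) * \<mu>"
      using norm_triangle_sub[of z dxN] norm_fst_le[of "z - dxN" "dl - dlN"] norm_fst_le[of dxN dlN]
        newton_step_norm_le[OF K F _ \<sigma> newton] \<mu> by (simp add: w_def n_def)
    then show ?thesis
      using K(1) xA(1) \<mu> M0 unfolding n_def by (intro mult_left_mono add_right_mono) auto
  qed
  finally have "norm w \<le> (2 * K * n * a * M * \<mu>) * norm w + K * n * a * (2 * M * K * (C1 + n) + C1) * \<mu>^2"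
    by (simp add: algebra_simps power2_eq_square)
  \<comment> \<open>smallness of \<open>\<mu>\<close> lets the term proportional to \<open>norm w\<close> be absorbed\<close>
  moreover have "(2 * K * n * a * M * \<mu>) * norm w \<le> 1/2 * norm w"
    using small by (intro mult_right_mono) auto
  moreover have "norm (restr I d - restr I dxN) \<le> norm w"
  proof -
    have "norm (restr I d - restr I dxN) \<le> norm (z - dxN)"
      by (rule norm_le_componentwise_cart) (simp add: restr_def z_def ls_full_dx_def)
    then show ?thesis using norm_fst_le[of "z - dxN" "dl - dlN"] by (simp add: w_def)
  qed
  ultimately show ?thesis by linarith
qed

lemma dl_ls_minus_newton:
  assumes "x$i \<noteq> 0" and newton: "Fprime Hf x l (dxN, dlN) = - Fmu g mup x l"
  shows "dl_ls mup x l d $ i - dlN$i = l$i / x$i * (dxN$i - d$i)"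
proof -
  have "l$i * dxN$i + x$i * dlN$i = mup - l$i * x$i"
    using arg_cong[OF newton, of "\<lambda>p. snd p $ i"] by (simp add: Fprime_def Fmu_def)
  with assms(1) show ?thesis by (simp add: dl_ls_def field_simps)
qed

lemma dl_ls_error_bound:
  fixes d dxN :: "real^'n"
  assumes x: "\<And>i. i \<in> I \<Longrightarrow> x$i \<noteq> 0" and lx: "0 \<le> \<beta>" "\<And>i. i \<in> I \<Longrightarrow> \<bar>l$i / x$i\<bar> \<le> \<beta>"
    and newton: "Fprime Hf x l (dxN, dlN) = - Fmu g mup x l"
  shows "norm (restr I (dl_ls mup x l d) - restr I dlN) \<le> real CARD('n) * (\<beta> * norm (restr I d - restr I dxN))"
proof (rule norm_le_card_mult_component_bound)
  fix i
  show "\<bar>(restr I (dl_ls mup x l d) - restr I dlN)$i\<bar> \<le> \<beta> * norm (restr I d - restr I dxN)"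
  proof (cases "i \<in> I")
    case True
    have "\<bar>(restr I (dl_ls mup x l d) - restr I dlN)$i\<bar> = \<bar>l$i / x$i\<bar> * \<bar>(restr I d - restr I dxN)$i\<bar>"
      using True dl_ls_minus_newton[OF x[OF True] newton, of d]
      by (simp add: restr_def abs_mult abs_minus_commute)
    also have "\<dots> \<le> \<beta> * norm (restr I d - restr I dxN)"
      using lx(2)[OF True] lx(1) by (intro mult_mono component_le_norm_cart) auto
    finally show ?thesis .
  qed (simp add: restr_def lx(1))
qed

lemma strict_complementarity_near:
  fixes x l xs ls :: "real^'n"
  assumes kkt: "0 \<le> xs$i" "0 \<le> ls$i" "xs$i * ls$i = 0" and m: "0 < m" "m \<le> xs$i + ls$i"
    and close: "\<bar>x$i - xs$i\<bar> < m/2" "\<bar>l$i - ls$i\<bar> < m/2"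
    and pos: "0 < x$i" "0 < l$i" and c: "\<bar>l$i * x$i - \<mu>\<bar> \<le> C1 * \<mu>"
  shows "xs$i = 0 \<Longrightarrow> m/2 < l$i \<and> x$i \<le> 2 * (1 + C1) / m * \<mu>"
    and "0 < xs$i \<Longrightarrow> l$i / x$i \<le> 4 * (1 + C1) / m^2 * \<mu>"
proof -
  have lx: "l$i * x$i \<le> (1 + C1) * \<mu>" using c by (simp add: abs_le_iff algebra_simps)
  have lx0: "0 \<le> (1 + C1) * \<mu>" using lx pos by (metis mult_pos_pos less_le_trans less_imp_le)
  show "m/2 < l$i \<and> x$i \<le> 2 * (1 + C1) / m * \<mu>" if "xs$i = 0"
  proof
    show l: "m/2 < l$i" using that kkt m close(2) unfolding abs_less_iff by linarith
    have "x$i * (m/2) \<le> x$i * l$i" using l pos by (intro mult_left_mono) auto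
    then have "x$i * m \<le> 2 * (1 + C1) * \<mu>" using lx by (simp add: algebra_simps)
    with m(1) show "x$i \<le> 2 * (1 + C1) / m * \<mu>" by (simp add: field_simps)
  qed
  show "l$i / x$i \<le> 4 * (1 + C1) / m^2 * \<mu>" if "0 < xs$i"
  proof -
    have x: "m/2 < x$i" using that kkt m close(1) unfolding abs_less_iff by simp
    have "l$i / x$i = (l$i * x$i) / x$i^2" using pos by (simp add: power2_eq_square)
    also have "\<dots> \<le> (1 + C1) * \<mu> / x$i^2" using lx by (intro divide_right_mono) auto
    also have "\<dots> \<le> (1 + C1) * \<mu> / (m/2)^2"
      using x m(1) lx0 by (intro divide_left_mono power_mono mult_pos_pos) auto
    also have "\<dots> = 4 * (1 + C1) / m^2 * \<mu>" by (simp add: power2_eq_square)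
    finally show ?thesis .
  qed
qed

lemma ls_newton_error_near_solution:
  fixes x l xs ls :: "real^'n" and m C1 K M :: real
  defines "n \<equiv> real CARD('n)" and "a \<equiv> 2 * (1 + C1) / m" and "b \<equiv> 4 * (1 + C1) / m^2"
  defines "Cx \<equiv> 2 * K * n * a * (2 * M * K * (C1 + n) + C1)"
  assumes kkt: "\<And>i. 0 \<le> xs$i" "\<And>i. 0 \<le> ls$i" "\<And>i. xs$i * ls$i = 0"
    and m: "0 < m" "\<And>i. m \<le> xs$i + ls$i"
    and A: "A = {i. xs$i = 0}" and I: "I = {i. 0 < xs$i}"
    and close: "norm ((x, l) - (xs, ls)) < m/2"
    and pos: "\<forall>i. 0 < x$i \<and> 0 < l$i"
    and K: "0 \<le> K" "\<And>w. norm w \<le> K * norm (Fprime Hf x l w)"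
    and M: "norm (Hf x) \<le> M"
    and \<mu>: "0 < \<mu>" "a * M * \<mu> \<le> m/2" "4 * K * n * a * M * \<mu> \<le> 1"
    and \<sigma>: "0 \<le> \<sigma>" "\<sigma> \<le> 1"
    and F: "norm (Fmu g \<mu> x l) \<le> C1 * \<mu>"
    and dxA: "\<forall>i\<in>A. dxA i = dxS g Hf (\<sigma> * \<mu>) x l i \<or> dxA i = dxC (\<sigma> * \<mu>) x l i"
    and ls: "ls_system g Hf A I (\<sigma> * \<mu>) x l dxA d"
    and newton: "Fprime Hf x l (dxN, dlN) = - Fmu g (\<sigma> * \<mu>) x l"
  shows "norm (restr I d - restr I dxN) \<le> Cx * \<mu>^2"
    and "norm (restr I (dl_ls (\<sigma> * \<mu>) x l d) - restr I dlN) \<le> n * b * Cx * \<mu>^3"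
proof -
  have "0 \<le> C1 * \<mu>" using F norm_ge_zero order_trans by blast
  then have "0 \<le> C1" using \<mu>(1) by (simp add: zero_le_mult_iff)
  then have a: "0 \<le> a" and b: "0 \<le> b" using m(1) by (simp_all add: a_def b_def)
  have x_pos: "\<And>i. 0 < x$i" and l_pos: "\<And>i. 0 < l$i" using pos by blast+
  have close': "norm (x - xs, l - ls) < m/2" using close by simp
  have "\<bar>x$i - xs$i\<bar> < m/2" "\<bar>l$i - ls$i\<bar> < m/2" for i
    using close' component_le_norm_cart[of "x - xs" i] component_le_norm_cart[of "l - ls" i]
      norm_fst_le[of "x - xs" "l - ls"] norm_snd_le[of "l - ls" "x - xs"] by simp_all
  note sc = strict_complementarity_near[OF kkt m this x_pos l_pos Fmu_component_le(2)[OF F]]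
  have xA: "x$i \<le> a * \<mu>" and lA: "m/2 < l$i" if "i \<in> A" for i
    using sc(1)[of i] that by (auto simp: A a_def)
  have den: "x$i * Hf x$i$i + l$i \<noteq> 0" if "i \<in> A" for i
  proof -
    have "\<bar>x$i * Hf x$i$i\<bar> \<le> a * \<mu> * M"
      unfolding abs_mult using xA[OF that] x_pos[of i] matrix_entry_le_norm[of "Hf x" i i] M a \<mu>(1)
      by (intro mult_mono) auto
    then show ?thesis using lA[OF that] \<mu>(2) by (simp add: algebra_simps)
  qed
  have AI: "A \<inter> I = {}" "A \<union> I = UNIV" using kkt(1) by (auto simp: A I order_le_less)
  show dx: "norm (restr I d - restr I dxN) \<le> Cx * \<mu>^2"
    using ls_newton_dx_error_bound[OF AI x_pos l_pos K M \<mu>(1) \<sigma> F a xA den \<mu>(3)[unfolded n_def] dxA ls newton]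
    by (simp add: Cx_def n_def)
  have lxI: "\<bar>l$i / x$i\<bar> \<le> b * \<mu>" if "i \<in> I" for i
    using sc(2)[of i] x_pos[of i] l_pos[of i] that by (simp add: I b_def)
  have "norm (restr I (dl_ls (\<sigma> * \<mu>) x l d) - restr I dlN) \<le> n * (b * \<mu> * norm (restr I d - restr I dxN))"
    unfolding n_def using b \<mu>(1) lxI x_pos
    by (intro dl_ls_error_bound[OF _ _ _ newton]) (auto simp: less_le)
  also have "\<dots> \<le> n * (b * \<mu> * (Cx * \<mu>^2))"
    using dx b \<mu>(1) unfolding n_def by (intro mult_left_mono) auto
  finally show "norm (restr I (dl_ls (\<sigma> * \<mu>) x l d) - restr I dlN) \<le> n * b * Cx * \<mu>^3"
    by (simp add: power3_eq_cube power2_eq_square algebra_simps)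
qed

theorem mainTheorem7:
  fixes f :: "real^'n \<Rightarrow> real" and g :: "real^'n \<Rightarrow> real^'n" and Hf :: "real^'n \<Rightarrow> real^'n^'n"
    and xs ls :: "real^'n" and A I :: "'n set"
    and \<delta> \<mu>h C1 C4 \<sigma> :: real and xt lt :: "real \<Rightarrow> real^'n"
  assumes grad: "\<And>x. (f has_derivative (\<lambda>h. g x \<bullet> h)) (at x)"
    and hess: "\<And>x. (g has_derivative (\<lambda>h. Hf x *v h)) (at x)"
    and hess_loclip: "\<And>x. \<exists>e>0. \<exists>L. \<forall>y\<in>ball x e. \<forall>z\<in>ball x e. norm (Hf y - Hf z) \<le> L * norm (y - z)"
    and kkt: "g xs = ls" "\<And>i. xs$i \<ge> 0" "\<And>i. ls$i \<ge> 0" "\<And>i. xs$i * ls$i = 0"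
    and strict: "\<And>i. xs$i + ls$i > 0"
    and A_def: "A = {i. xs$i = 0}" and I_def: "I = {i. xs$i > 0}"
    and pd: "\<And>v. v \<noteq> 0 \<Longrightarrow> (\<forall>i\<in>A. v$i = 0) \<Longrightarrow> v \<bullet> (Hf xs *v v) > 0"
    and \<delta>pos: "\<delta> > 0" and \<mu>hpos: "\<mu>h > 0"
    and Fprime_inv: "\<exists>K. \<forall>p\<in>ball (xs, ls) \<delta>. \<forall>w. norm w \<le> K * norm (Fprime Hf (fst p) (snd p) w)"
    and traj: "\<And>\<mu>. 0 < \<mu> \<Longrightarrow> \<mu> \<le> \<mu>h \<Longrightarrow> Fmu g \<mu> (xt \<mu>) (lt \<mu>) = 0"
    and traj_pos: "\<And>\<mu> i. 0 < \<mu> \<Longrightarrow> \<mu> \<le> \<mu>h \<Longrightarrow> xt \<mu> $ i > 0 \<and> lt \<mu> $ i > 0"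
    and traj_lip: "\<exists>L. \<forall>\<mu>\<in>{0<..\<mu>h}. \<forall>\<nu>\<in>{0<..\<mu>h}. norm ((xt \<mu>, lt \<mu>) - (xt \<nu>, lt \<nu>)) \<le> L * \<bar>\<mu> - \<nu>\<bar>"
    and traj_bound: "\<And>\<mu>. 0 < \<mu> \<Longrightarrow> \<mu> \<le> \<mu>h \<Longrightarrow> norm ((xt \<mu>, lt \<mu>) - (xs, ls)) \<le> C4 * \<mu>"
    and \<sigma>: "0 < \<sigma>" "\<sigma> < 1" and C1pos: "C1 > 0"
  shows "\<exists>\<rho>>0. \<exists>\<mu>b. 0 < \<mu>b \<and> \<mu>b \<le> \<mu>h \<and> (\<exists>C>0.
     \<forall>\<mu> x l dxA d dxN dlN.
        0 < \<mu> \<longrightarrow> \<mu> \<le> \<mu>b \<longrightarrow>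
        (x, l) \<in> ball (xs, ls) \<delta> \<longrightarrow>
        (\<forall>i. x$i > 0 \<and> l$i > 0) \<longrightarrow>
        norm ((x, l) - (xt \<mu>, lt \<mu>)) < \<rho> \<longrightarrow>
        norm (Fmu g \<mu> x l) \<le> C1 * \<mu> \<longrightarrow>
        (\<forall>i\<in>A. dxA i = dxS g Hf (\<sigma> * \<mu>) x l i \<or> dxA i = dxC (\<sigma> * \<mu>) x l i) \<longrightarrow>
        ls_system g Hf A I (\<sigma> * \<mu>) x l dxA d \<longrightarrow>
        Fprime Hf x l (dxN, dlN) = - Fmu g (\<sigma> * \<mu>) x l \<longrightarrow>
        norm (restr I d - restr I dxN) \<le> C * \<mu>^2 \<and>
        norm (restr I (dl_ls (\<sigma> * \<mu>) x l d) - restr I dlN) \<le> C * \<mu>^3)"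
proof -
  obtain K where K: "0 \<le> K" "\<forall>p\<in>ball (xs, ls) \<delta>. \<forall>w. norm w \<le> K * norm (Fprime Hf (fst p) (snd p) w)"
    using bound_with_nonneg_constant[where u=norm and f="\<lambda>p w. norm (Fprime Hf (fst p) (snd p) w)",
        OF Fprime_inv norm_ge_zero] by blast
  obtain e L where e: "0 < e" and "\<forall>y\<in>ball xs e. \<forall>z\<in>ball xs e. norm (Hf y - Hf z) \<le> L * norm (y - z)"
    using hess_loclip[of xs] by blast
  then obtain M where M: "0 \<le> M" "\<forall>y\<in>ball xs e. norm (Hf y) \<le> M"
    using lipschitz_on_ball_imp_bounded[OF e] by blast
  obtain m where m: "0 < m" "\<And>i. m \<le> xs$i + ls$i"
    using finite_pos_lower_bound[of "\<lambda>i. xs$i + ls$i"] strict by auto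
  define n where "n = real CARD('n)"
  define a where "a = 2 * (1 + C1) / m"
  define b where "b = 4 * (1 + C1) / m^2"
  define Cx where "Cx = 2 * K * n * a * (2 * M * K * (C1 + n) + C1)"
  define \<eta> where "\<eta> = min m e"
  define \<mu>b where "\<mu>b = min (min \<mu>h (\<eta> / 4 / (\<bar>C4\<bar> + 1))) (min (m / 2 / (a * M + 1)) (1 / (4 * K * n * a * M + 1)))"
  define C where "C = Cx + n * b * Cx + 1"
  have a: "0 \<le> a" and b: "0 \<le> b" and n: "0 \<le> n" and Cx: "0 \<le> Cx"
    using C1pos m(1) K M by (simp_all add: a_def b_def n_def Cx_def)
  have \<eta>: "0 < \<eta>" using m(1) e by (simp add: \<eta>_def)
  have \<mu>b: "0 < \<mu>b" "\<mu>b \<le> \<mu>h" using \<mu>hpos \<eta> m(1) a M K n by (simp_all add: \<mu>b_def add_nonneg_pos)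
  have C: "0 < C" using Cx mult_nonneg_nonneg[OF mult_nonneg_nonneg[OF n b] Cx] by (simp add: C_def)
  show ?thesis
  proof (rule exI[of _ "\<eta> / 4"], rule conjI, use \<eta> in simp, rule exI[of _ \<mu>b],
      rule conjI[OF \<mu>b(1) conjI[OF \<mu>b(2) exI[of _ C]]], rule conjI[OF C], intro allI impI conjI)
    fix \<mu> x l dxA d dxN dlN
    assume \<mu>: "0 < \<mu>" "\<mu> \<le> \<mu>b" and ball: "(x, l) \<in> ball (xs, ls) \<delta>" and pos: "\<forall>i. 0 < x$i \<and> 0 < l$i"
      and near: "norm ((x, l) - (xt \<mu>, lt \<mu>)) < \<eta> / 4" and F: "norm (Fmu g \<mu> x l) \<le> C1 * \<mu>"
      and dxA: "\<forall>i\<in>A. dxA i = dxS g Hf (\<sigma> * \<mu>) x l i \<or> dxA i = dxC (\<sigma> * \<mu>) x l i"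
      and ls: "ls_system g Hf A I (\<sigma> * \<mu>) x l dxA d"
      and newton: "Fprime Hf x l (dxN, dlN) = - Fmu g (\<sigma> * \<mu>) x l"
    have \<mu>_le: "\<mu> \<le> \<mu>h" "\<mu> \<le> \<eta> / 4 / (\<bar>C4\<bar> + 1)" "\<mu> \<le> m / 2 / (a * M + 1)"
      "\<mu> \<le> 1 / (4 * K * n * a * M + 1)"
      using \<mu>(2) by (simp_all add: \<mu>b_def)
    have "C4 * \<mu> \<le> \<eta> / 4"
      using mult_le_of_le_divide_add_one[OF abs_ge_zero less_imp_le[OF \<mu>(1)] \<mu>_le(2)]
        mult_right_mono[OF abs_ge_self less_imp_le[OF \<mu>(1)], of C4] by linarith
    have small: "a * M * \<mu> \<le> m / 2" "4 * K * n * a * M * \<mu> \<le> 1"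
      using mult_le_of_le_divide_add_one[OF _ _ \<mu>_le(3)] mult_le_of_le_divide_add_one[OF _ _ \<mu>_le(4)]
        a M(1) K(1) n \<mu>(1) by simp_all
    have "norm ((x, l) - (xt \<mu>, lt \<mu>)) + norm ((xt \<mu>, lt \<mu>) - (xs, ls)) < \<eta> / 2"
      using near traj_bound[OF \<mu>(1) \<mu>_le(1)] \<open>C4 * \<mu> \<le> \<eta> / 4\<close> by linarith
    then have close: "norm (x - xs, l - ls) < \<eta> / 2"
      using norm_triangle_lt by (fastforce simp: algebra_simps)
    then have "norm (x - xs) < e"
      using norm_fst_le[of "x - xs" "l - ls"] min.cobounded2[of m e] e unfolding \<eta>_def by linarith
    then have HM: "norm (Hf x) \<le> M" using M(2) by (simp add: dist_norm norm_minus_commute)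
    have close_m: "norm ((x, l) - (xs, ls)) < m / 2"
      using close min.cobounded1[of m e] unfolding \<eta>_def by simp
    have Kx: "norm w \<le> K * norm (Fprime Hf x l w)" for w using K(2) ball by fastforce
    note bounds = ls_newton_error_near_solution[OF kkt(2,3,4) m A_def I_def close_m pos K(1) Kx HM \<mu>(1)
        small(1)[unfolded a_def] small(2)[unfolded a_def n_def]
        less_imp_le[OF \<sigma>(1)] less_imp_le[OF \<sigma>(2)] F dxA ls newton]
    have "norm (restr I d - restr I dxN) \<le> Cx * \<mu>^2"
      using bounds(1) by (simp add: Cx_def a_def n_def)
    also have "\<dots> \<le> C * \<mu>^2"
      using mult_nonneg_nonneg[OF mult_nonneg_nonneg[OF n b] Cx] by (intro mult_right_mono) (auto simp: C_def)
    finally show "norm (restr I d - restr I dxN) \<le> C * \<mu>^2" .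
    have "norm (restr I (dl_ls (\<sigma> * \<mu>) x l d) - restr I dlN) \<le> n * b * Cx * \<mu>^3"
      using bounds(2) by (simp add: Cx_def a_def b_def n_def)
    also have "\<dots> \<le> C * \<mu>^3" using Cx \<mu>(1) by (intro mult_right_mono) (auto simp: C_def)
    finally show "norm (restr I (dl_ls (\<sigma> * \<mu>) x l d) - restr I dlN) \<le> C * \<mu>^3" .
  qed
qed

end
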